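(* Fix revenues $r_i\in[0,1]$ ($i=1,\dots,N$) and penalty $c\in[0,1]$. Let $\mathbf{v},\mathbf{w}\in[0,1]^N$ and $q_v,q_w\in[0,1]$, and let $\mathbf{S}_v^*\in\arg\max_{\mathbf{S}}\mathbb{E}[U(\mathbf{S};\mathbf{v},q_v)]$. Then $$\big|\mathbb{E}[U(\mathbf{S}_v^*;\mathbf{v},q_v)]-\mathbb{E}[U(\mathbf{S}_v^*;\mathbf{w},q_w)]\big|\le\sum_{i\in\mathbf{S}_v^*}\big(2|v_i-w_i|+(N+1)|q_v-q_w|\big).$$
   Context: A sequence $\mathbf{S}=(S_1,\dots,S_m)$ consists of distinct items from $\{1,\dots,N\}$; $I(k)$ denotes the item at position $k$, and the maximum is over all such sequences. For $\mathbf{u}\in[0,1]^N$ and $q\in[0,1]$, $$\mathbb{E}[U(\mathbf{S};\mathbf{u},q)]=\sum_{l=1}^{m} r_{I(l)}u_{I(l)}\,q^{l-1}\prod_{k=1}^{l-1}(1-u_{I(k)})\;-\;c\sum_{k=1}^{m}q^{k-1}(1-q)\prod_{j=1}^{k}(1-u_{I(j)}).$$ (This is the expected payoff when a user scans the sequence, selects item $i$ with probability $u_i$ earning $r_i$, and otherwise abandons with probability $1-q$ at penalty $c$ or continues with probability $q$.) *)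

theory Defs
  imports "HOL-Analysis.Analysis"
begin

definition valid_seq :: "nat \<Rightarrow> nat list \<Rightarrow> bool" where
  "valid_seq N S \<longleftrightarrow> distinct S \<and> set S \<subseteq> {1..N}"

text \<open>Expected utility. Position l (1-based in the paper) is index l-1 here.\<close>
definition exp_util :: "(nat \<Rightarrow> real) \<Rightarrow> real \<Rightarrow> nat list \<Rightarrow> (nat \<Rightarrow> real) \<Rightarrow> real \<Rightarrow> real" where
  "exp_util r c S u q =
     (\<Sum>l<length S. r (S!l) * u (S!l) * q ^ l * (\<Prod>k<l. 1 - u (S!k)))
     - c * (\<Sum>k<length S. q ^ k * (1 - q) * (\<Prod>j\<le>k. 1 - u (S!j)))"

end

theory Submission
  imports Defs
begin

text \<open>Peeling off the first item shows that the expected utility satisfies the recursion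
  \<open>U(x # S) = r\<^sub>x u\<^sub>x - c (1 - q)(1 - u\<^sub>x) + q (1 - u\<^sub>x) U(S)\<close> with \<open>U([]) = 0\<close>, so \<open>U(S)\<close> is
  an iterated convex combination of numbers in \<open>[-1, 1]\<close> and \<open>|U| \<le> 1\<close>. Differencing the recursion, each item
  contributes at most \<open>2 |v\<^sub>x - w\<^sub>x|\<close> when the selection probabilities change and at
  most \<open>2 |q\<^sub>v - q\<^sub>w|\<close> when the continuation probability changes, the difference of the
  tails being damped by a factor at most 1. Since a valid sequence has at most \<open>N\<close> items,
  \<open>2 \<le> N + 1\<close> whenever it is nonempty.\<close>

lemma exp_util_Nil [simp]: "exp_util r c [] u q = 0"
  by (simp add: exp_util_def)

lemma exp_util_Cons:
  "exp_util r c (x # xs) u q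
     = r x * u x - c * (1 - q) * (1 - u x) + q * (1 - u x) * exp_util r c xs u q"
proof -
  have gain: "(\<Sum>l<length (x # xs). r ((x # xs) ! l) * u ((x # xs) ! l) * q ^ l
                 * (\<Prod>k<l. 1 - u ((x # xs) ! k)))
      = r x * u x + q * (1 - u x)
          * (\<Sum>l<length xs. r (xs ! l) * u (xs ! l) * q ^ l * (\<Prod>k<l. 1 - u (xs ! k)))"
    by (simp only: length_Cons sum.lessThan_Suc_shift prod.lessThan_Suc_shift nth_Cons_0
        nth_Cons_Suc) (simp add: sum_distrib_left mult_ac)
  have loss: "(\<Sum>k<length (x # xs). q ^ k * (1 - q) * (\<Prod>j\<le>k. 1 - u ((x # xs) ! j)))
      = (1 - q) * (1 - u x) + q * (1 - u x)
          * (\<Sum>k<length xs. q ^ k * (1 - q) * (\<Prod>j\<le>k. 1 - u (xs ! j)))"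
    by (simp only: length_Cons sum.lessThan_Suc_shift prod.atMost_Suc_shift nth_Cons_0
        nth_Cons_Suc) (simp add: sum_distrib_left mult_ac)
  show ?thesis
    unfolding exp_util_def gain loss by (simp add: algebra_simps)
qed

lemma abs_exp_util_le_1:
  assumes "\<forall>i\<in>set xs. \<bar>r i\<bar> \<le> 1 \<and> 0 \<le> u i \<and> u i \<le> 1"
    and "\<bar>c\<bar> \<le> 1" "0 \<le> q" "q \<le> 1"
  shows "\<bar>exp_util r c xs u q\<bar> \<le> 1"
  using assms(1)
proof (induction xs)
  case Nil
  then show ?case by simp
next
  case (Cons x xs)
  define U where "U = exp_util r c xs u q"
  from Cons have x: "\<bar>r x\<bar> \<le> 1" "0 \<le> u x" "u x \<le> 1" and IH: "\<bar>U\<bar> \<le> 1"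
    unfolding U_def by auto
  have "\<bar>exp_util r c (x # xs) u q\<bar>
      \<le> \<bar>r x * u x\<bar> + \<bar>c * (1 - q) * (1 - u x)\<bar> + \<bar>q * (1 - u x) * U\<bar>"
    unfolding exp_util_Cons U_def by linarith
  also have "\<dots> = u x * \<bar>r x\<bar> + (1 - u x) * ((1 - q) * \<bar>c\<bar> + q * \<bar>U\<bar>)"
    using x assms(3,4) by (simp only: abs_mult abs_of_nonneg) (simp add: algebra_simps)
  also have "\<dots> \<le> u x * 1 + (1 - u x) * ((1 - q) * 1 + q * 1)"
    using x IH assms(2-4) by (intro add_mono mult_left_mono) auto
  finally show ?case by simp
qed

lemma abs_exp_util_diff_le_selection:
  assumes "\<forall>i\<in>set xs. \<bar>r i\<bar> \<le> 1 \<and> 0 \<le> v i \<and> v i \<le> 1 \<and> 0 \<le> w i \<and> w i \<le> 1"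
    and "\<bar>c\<bar> \<le> 1" "0 \<le> q" "q \<le> 1"
  shows "\<bar>exp_util r c xs v q - exp_util r c xs w q\<bar> \<le> (\<Sum>i\<leftarrow>xs. 2 * \<bar>v i - w i\<bar>)"
  using assms(1)
proof (induction xs)
  case Nil
  then show ?case by simp
next
  case (Cons x xs)
  define V where "V = exp_util r c xs v q"
  define W where "W = exp_util r c xs w q"
  from Cons have x: "\<bar>r x\<bar> \<le> 1" "0 \<le> w x" "w x \<le> 1"
    and IH: "\<bar>V - W\<bar> \<le> (\<Sum>i\<leftarrow>xs. 2 * \<bar>v i - w i\<bar>)"
    unfolding V_def W_def by auto
  have V: "\<bar>V\<bar> \<le> 1"
    unfolding V_def using Cons.prems assms(2-4) by (intro abs_exp_util_le_1) auto
  have "\<bar>c * (1 - q)\<bar> = \<bar>c\<bar> * (1 - q)" "\<bar>q * V\<bar> = q * \<bar>V\<bar>"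
    using assms(3,4) by (simp_all add: abs_mult)
  then have "\<bar>r x + c * (1 - q) - q * V\<bar> \<le> \<bar>r x\<bar> + \<bar>c\<bar> * (1 - q) + q * \<bar>V\<bar>"
    by linarith
  also have "\<dots> \<le> 1 + 1 * (1 - q) + q * 1"
    using x V assms(2-4) by (intro add_mono mult_right_mono mult_left_mono) auto
  finally have coeff: "\<bar>r x + c * (1 - q) - q * V\<bar> \<le> 2"
    by simp
  have damping: "\<bar>q * (1 - w x)\<bar> \<le> 1"
    using x assms(3,4) by (simp add: abs_mult mult_le_one)
  have "exp_util r c (x # xs) v q - exp_util r c (x # xs) w q
      = (r x + c * (1 - q) - q * V) * (v x - w x) + q * (1 - w x) * (V - W)"
    unfolding exp_util_Cons V_def W_def by (simp add: algebra_simps)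
  also have "\<bar>\<dots>\<bar> \<le> \<bar>(r x + c * (1 - q) - q * V) * (v x - w x)\<bar> + \<bar>q * (1 - w x) * (V - W)\<bar>"
    by (rule abs_triangle_ineq)
  also have "\<dots> \<le> 2 * \<bar>v x - w x\<bar> + \<bar>V - W\<bar>"
    using coeff damping
    by (intro add_mono) (simp_all add: abs_mult mult_right_mono mult_left_le_one_le)
  finally show ?case using IH by simp
qed

lemma abs_exp_util_diff_le_continuation:
  assumes "\<forall>i\<in>set xs. \<bar>r i\<bar> \<le> 1 \<and> 0 \<le> u i \<and> u i \<le> 1"
    and "\<bar>c\<bar> \<le> 1" "0 \<le> q1" "q1 \<le> 1" "0 \<le> q2" "q2 \<le> 1"
  shows "\<bar>exp_util r c xs u q1 - exp_util r c xs u q2\<bar> \<le> 2 * real (length xs) * \<bar>q1 - q2\<bar>"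
  using assms(1)
proof (induction xs)
  case Nil
  then show ?case by simp
next
  case (Cons x xs)
  define V where "V = exp_util r c xs u q1"
  define W where "W = exp_util r c xs u q2"
  from Cons have x: "0 \<le> u x" "u x \<le> 1"
    and IH: "\<bar>V - W\<bar> \<le> 2 * real (length xs) * \<bar>q1 - q2\<bar>"
    unfolding V_def W_def by auto
  have "\<bar>V\<bar> \<le> 1"
    unfolding V_def using Cons.prems assms(2-4) by (intro abs_exp_util_le_1) auto
  then have coeff: "\<bar>c + V\<bar> \<le> 2"
    using assms(2) by linarith
  have "exp_util r c (x # xs) u q1 - exp_util r c (x # xs) u q2
      = (1 - u x) * ((c + V) * (q1 - q2) + q2 * (V - W))"
    unfolding exp_util_Cons V_def W_def by (simp add: algebra_simps)
  also have "\<bar>\<dots>\<bar> \<le> \<bar>(c + V) * (q1 - q2) + q2 * (V - W)\<bar>"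
    using x by (simp add: abs_mult mult_left_le_one_le)
  also have "\<dots> \<le> \<bar>(c + V) * (q1 - q2)\<bar> + \<bar>q2 * (V - W)\<bar>"
    by (rule abs_triangle_ineq)
  also have "\<dots> \<le> 2 * \<bar>q1 - q2\<bar> + \<bar>V - W\<bar>"
    using coeff assms(5,6) by (intro add_mono) (simp_all add: abs_mult mult_right_mono mult_left_le_one_le)
  finally show ?case using IH by (simp add: algebra_simps)
qed

lemma valid_seq_length_le: "valid_seq N S \<Longrightarrow> length S \<le> N"
  unfolding valid_seq_def by (metis card_atLeastAtMost card_mono diff_Suc_1 distinct_card finite_atLeastAtMost)

theorem lemma4:
  fixes N :: nat and r v w :: "nat \<Rightarrow> real" and c qv qw :: real and S :: "nat list"
  assumes r: "\<And>i. i \<in> {1..N} \<Longrightarrow> 0 \<le> r i \<and> r i \<le> 1"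
    and c: "0 \<le> c" "c \<le> 1"
    and v: "\<And>i. i \<in> {1..N} \<Longrightarrow> 0 \<le> v i \<and> v i \<le> 1"
    and w: "\<And>i. i \<in> {1..N} \<Longrightarrow> 0 \<le> w i \<and> w i \<le> 1"
    and qv: "0 \<le> qv" "qv \<le> 1"
    and qw: "0 \<le> qw" "qw \<le> 1"
    and S: "valid_seq N S"
    and opt: "\<And>T. valid_seq N T \<Longrightarrow> exp_util r c T v qv \<le> exp_util r c S v qv"
  shows "\<bar>exp_util r c S v qv - exp_util r c S w qw\<bar>
           \<le> (\<Sum>i\<in>set S. 2 * \<bar>v i - w i\<bar> + (real N + 1) * \<bar>qv - qw\<bar>)"
proof -
  from S have distinct: "distinct S" and items: "set S \<subseteq> {1..N}"
    by (auto simp: valid_seq_def)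
  then have bounds: "\<forall>i\<in>set S. \<bar>r i\<bar> \<le> 1 \<and> 0 \<le> v i \<and> v i \<le> 1 \<and> 0 \<le> w i \<and> w i \<le> 1"
    using r v w by (auto simp: subset_iff)
  have selection: "\<bar>exp_util r c S v qv - exp_util r c S w qv\<bar> \<le> (\<Sum>i\<in>set S. 2 * \<bar>v i - w i\<bar>)"
    using abs_exp_util_diff_le_selection[OF bounds _ qv] c distinct
    by (simp add: sum_list_distinct_conv_sum_set)
  have "\<bar>exp_util r c S w qv - exp_util r c S w qw\<bar> \<le> 2 * real (length S) * \<bar>qv - qw\<bar>"
    using bounds c qv qw by (intro abs_exp_util_diff_le_continuation) auto
  also have "\<dots> \<le> real (length S) * (real N + 1) * \<bar>qv - qw\<bar>"
    using valid_seq_length_le[OF S] by (cases N) (auto simp: algebra_simps)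
  finally have continuation:
    "\<bar>exp_util r c S w qv - exp_util r c S w qw\<bar> \<le> real (card (set S)) * (real N + 1) * \<bar>qv - qw\<bar>"
    using distinct by (simp add: distinct_card)
  have "\<bar>exp_util r c S v qv - exp_util r c S w qw\<bar>
      \<le> \<bar>exp_util r c S v qv - exp_util r c S w qv\<bar> + \<bar>exp_util r c S w qv - exp_util r c S w qw\<bar>"
    by linarith
  also have "\<dots> \<le> (\<Sum>i\<in>set S. 2 * \<bar>v i - w i\<bar>) + real (card (set S)) * (real N + 1) * \<bar>qv - qw\<bar>"
    using selection continuation by (rule add_mono)
  also have "\<dots> = (\<Sum>i\<in>set S. 2 * \<bar>v i - w i\<bar> + (real N + 1) * \<bar>qv - qw\<bar>)"
    by (simp add: sum.distrib)
  finally show ?thesis .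
qed

end
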